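(* For all integers $n,f$ with $1\le f\le n-1$, $\mathrm{Cons}(n,f)$ is not $C$-reducible to $\mathrm{Cons}(n+1,f)$.
   Context: Model: a finite set of processes runs an asynchronous algorithm communicating by reliable message passing with unbounded delays and speeds; processes fail only by crashing. Time is $\mathcal T=\mathbb N$; a failure pattern $F$ for $\Pi$ is a nondecreasing map $\mathcal T\to2^\Pi$, $Faulty(F)=\bigcup_tF(t)$. A task $T=(P,f)$ consists of a binary agreement problem $P$ (mapping $(F,\vec V)$, $\vec V\in\{0,1\}^\Pi$, to a nonempty $P(F,\vec V)\subseteq\{0,1\}$) and a resiliency degree $f$. An algorithm solves $T$ if in every run with $|Faulty(F)|\le f$ and initial values $\vec V$: every correct process eventually decides, decisions are irrevocable, no two processes decide differently, and decisions lie in $P(F,\vec V)$. Binary Consensus $\mathrm{Cons}(n,f)=(\mathrm{Cons}_{\Pi},f)$ on $\Pi=\{1,\dots,n\}$: $\mathrm{Cons}_\Pi(F,\vec V)=\{v\}$ if all entries of $\vec V$ equal $v$, and $\{0,1\}$ otherwise. Oracles: for $T=(P,f)$ on process set $\Pi'$, $\mathcal O.T$ is a black box with consultants $\Pi'$; its history is a sequence of successive consultations, in each of which every consultant may submit at most one query in $\{0,1\}$ and the oracle returns a common response $d$ with $d\in P(F,\vec V)$ for every $\vec V$ extending the partial query vector (the oracle may use the whole failure pattern, including future crashes), and every correct querier gets the response whenever at least $|\Pi'|-f$ consultants query; $\mathcal O.T$ is the most general such oracle. $C$-reduction: $T_1\le_C T_2$ if there is an algorithm solving $T_1$ whose processes,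 besides message passing, may consult a single oracle $\mathcal O.T_2'$ where $T_2'$ is a renamed copy of $T_2$ whose consultant set contains or is contained in the process set of $T_1$; consultants that are not processes of $T_1$ never query and count as crashed from the start for the oracle (so here, processes $1,\dots,n$ may consult $\mathcal O.\mathrm{Cons}(n+1,f)$ on $\{1,\dots,n+1\}$, process $n+1$ being absent). *)

theory Defs
  imports Main "HOL-Library.Multiset"
begin

text \<open>A failure pattern is a nondecreasing map from time (nat) to sets of processes.
  Processes are natural numbers; the process set of Cons(n,f) is {1..n}.\<close>

definition failure_pattern :: "nat set \<Rightarrow> (nat \<Rightarrow> nat set) \<Rightarrow> bool" where
  "failure_pattern Pi F \<longleftrightarrow> mono F \<and> (\<forall>t. F t \<subseteq> Pi)"

definition Faulty :: "(nat \<Rightarrow> nat set) \<Rightarrow> nat set" where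
  "Faulty F = (\<Union>t. F t)"

text \<open>Binary consensus problem on process set Pi: if all entries of the input vector
  (restricted to Pi) equal v then {v}, otherwise {0,1} (booleans encode 0/1).
  The failure pattern argument is unused, as in the paper.\<close>

definition ConsP :: "nat set \<Rightarrow> (nat \<Rightarrow> nat set) \<Rightarrow> (nat \<Rightarrow> bool) \<Rightarrow> bool set" where
  "ConsP Pi F V = (if \<exists>v. \<forall>i\<in>Pi. V i = v then {V (SOME i. i \<in> Pi)} else UNIV)"

text \<open>Input of a process step: nothing (null receipt), a message from a sender,
  or the response of the oracle to the pending query.\<close>

datatype 'm inp = NoInp | Msg nat 'm | Resp bool

text \<open>A deterministic algorithm: initial state as a function of process id and
  initial value; a step of process p in state s with input i yields the new state,
  the list of messages sent (destination, content) and possibly a query (0/1) to the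
  oracle; dec gives the (possible) decision value of a state.\<close>

record ('s, 'm) algo =
  ini :: "nat \<Rightarrow> bool \<Rightarrow> 's"
  nxt :: "nat \<Rightarrow> 's \<Rightarrow> 'm inp \<Rightarrow> 's"
  out :: "nat \<Rightarrow> 's \<Rightarrow> 'm inp \<Rightarrow> (nat \<times> 'm) list"
  qry :: "nat \<Rightarrow> 's \<Rightarrow> 'm inp \<Rightarrow> bool option"
  dec :: "nat \<Rightarrow> 's \<Rightarrow> bool option"

text \<open>Global configurations.  net: messages in transit (sender, destination, content);
  nq p: number of queries submitted by p (its k-th query belongs to consultation k);
  qv k p: query of consultant p in consultation k; rsp k: the common response of
  consultation k, once the oracle has fixed it; ng p: number of responses received by p.\<close>

record ('s, 'm) cfg =
  st  :: "nat \<Rightarrow> 's"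
  net :: "(nat \<times> nat \<times> 'm) multiset"
  nq  :: "nat \<Rightarrow> nat"
  qv  :: "nat \<Rightarrow> nat \<Rightarrow> bool option"
  rsp :: "nat \<Rightarrow> bool option"
  ng  :: "nat \<Rightarrow> nat"

datatype 'm ev = PStep nat "'m inp" | ORespond nat bool | Idle

definition init_cfg :: "('s, 'm) algo \<Rightarrow> (nat \<Rightarrow> bool) \<Rightarrow> ('s, 'm) cfg" where
  "init_cfg A V = \<lparr> st = (\<lambda>p. ini A p (V p)), net = {#}, nq = (\<lambda>_. 0),
     qv = (\<lambda>_ _. None), rsp = (\<lambda>_. None), ng = (\<lambda>_. 0) \<rparr>"

definition oracle_valid ::
  "nat \<Rightarrow> (nat \<Rightarrow> nat set) \<Rightarrow> ('s, 'm) cfg \<Rightarrow> nat \<Rightarrow> bool \<Rightarrow> bool" where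
  "oracle_valid m F' c k d \<longleftrightarrow>
     (\<forall>V. (\<forall>i\<in>{1..m}. \<forall>b. qv c k i = Some b \<longrightarrow> V i = b) \<longrightarrow> d \<in> ConsP {1..m} F' V)"

text \<open>Enabledness of events at time t, for processes {1..n}, failure pattern F of the
  processes, oracle on consultants {1..m} (consultants above n count as crashed from
  the start).\<close>

definition enabled ::
  "nat \<Rightarrow> nat \<Rightarrow> (nat \<Rightarrow> nat set) \<Rightarrow> nat \<Rightarrow> ('s, 'm) cfg \<Rightarrow> 'm ev \<Rightarrow> bool" where
  "enabled n m F t c e = (case e of
       PStep p i \<Rightarrow> p \<in> {1..n} \<and> p \<notin> F t \<and>
         (case i of NoInp \<Rightarrow> True
                  | Msg q x \<Rightarrow> (q, p, x) \<in># net c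
                  | Resp d \<Rightarrow> ng c p < nq c p \<and> rsp c (ng c p) = Some d)
     | ORespond k d \<Rightarrow> rsp c k = None \<and> (k = 0 \<or> rsp c (k - 1) \<noteq> None) \<and>
         oracle_valid m (\<lambda>t. F t \<union> {n+1..m}) c k d
     | Idle \<Rightarrow> True)"

text \<open>Effect of an event.  A query is registered only if the process has no pending
  query (a consultant submits at most one query per consultation, and consultations
  are successive).\<close>

definition effect :: "('s, 'm) algo \<Rightarrow> ('s, 'm) cfg \<Rightarrow> 'm ev \<Rightarrow> ('s, 'm) cfg" where
  "effect A c e = (case e of
       PStep p i \<Rightarrow>
         (let s = st c p;
              ng' = (case i of Resp _ \<Rightarrow> (ng c)(p := Suc (ng c p)) | _ \<Rightarrow> ng c);
              rcv = (case i of Msg q x \<Rightarrow> {#(q, p, x)#} | _ \<Rightarrow> {#});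
              snt = mset (map (\<lambda>(d, x). (p, d, x)) (out A p s i));
              c1 = c\<lparr> st := (st c)(p := nxt A p s i), net := net c - rcv + snt, ng := ng' \<rparr>
          in (case qry A p s i of
                Some b \<Rightarrow> if ng' p = nq c p
                          then c1\<lparr> qv := (qv c)(nq c p := (qv c (nq c p))(p := Some b)),
                                   nq := (nq c)(p := Suc (nq c p)) \<rparr>
                          else c1
              | None \<Rightarrow> c1))
     | ORespond k d \<Rightarrow> c\<lparr> rsp := (rsp c)(k := Some d) \<rparr>
     | Idle \<Rightarrow> c)"

definition correct :: "nat \<Rightarrow> (nat \<Rightarrow> nat set) \<Rightarrow> nat set" where
  "correct n F = {1..n} - Faulty F"

definition admissible_run ::
  "('s, 'm) algo \<Rightarrow> nat \<Rightarrow> nat \<Rightarrow> nat \<Rightarrow> (nat \<Rightarrow> nat set) \<Rightarrow> (nat \<Rightarrow> bool)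
     \<Rightarrow> (nat \<Rightarrow> ('s, 'm) cfg) \<Rightarrow> (nat \<Rightarrow> 'm ev) \<Rightarrow> bool" where
  "admissible_run A n m g F V \<rho> E \<longleftrightarrow>
     \<rho> 0 = init_cfg A V \<and>
     (\<forall>t. enabled n m F t (\<rho> t) (E t) \<and> \<rho> (Suc t) = effect A (\<rho> t) (E t)) \<and>
     \<comment> \<open>every correct process takes infinitely many steps\<close>
     (\<forall>p\<in>correct n F. \<forall>t. \<exists>t'\<ge>t. \<exists>i. E t' = PStep p i) \<and>
     \<comment> \<open>reliable channels: messages to correct processes are eventually received\<close>
     (\<forall>p\<in>correct n F. \<forall>t q x. (q, p, x) \<in># net (\<rho> t) \<longrightarrow>
         (\<exists>t'\<ge>t. E t' = PStep p (Msg q x))) \<and>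
     \<comment> \<open>oracle liveness: if at least m - g consultants query in consultation k,
        every correct querier of consultation k gets the response\<close>
     (\<forall>k. card {i\<in>{1..m}. \<exists>t. qv (\<rho> t) k i \<noteq> None} \<ge> m - g \<longrightarrow>
        (\<forall>p\<in>correct n F. (\<exists>t. qv (\<rho> t) k p \<noteq> None) \<longrightarrow> (\<exists>t. ng (\<rho> t) p > k)))"

definition solves_Cons_with_oracle ::
  "('s, 'm) algo \<Rightarrow> nat \<Rightarrow> nat \<Rightarrow> nat \<Rightarrow> nat \<Rightarrow> bool" where
  "solves_Cons_with_oracle A n f m g \<longleftrightarrow>
     (\<forall>F V \<rho> E. failure_pattern {1..n} F \<and> card (Faulty F) \<le> f \<and>
        admissible_run A n m g F V \<rho> E \<longrightarrow>
        \<comment> \<open>termination\<close>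
        (\<forall>p\<in>correct n F. \<exists>t. dec A p (st (\<rho> t) p) \<noteq> None) \<and>
        \<comment> \<open>irrevocability\<close>
        (\<forall>p\<in>{1..n}. \<forall>t d. dec A p (st (\<rho> t) p) = Some d \<longrightarrow>
            (\<forall>t'\<ge>t. dec A p (st (\<rho> t') p) = Some d)) \<and>
        \<comment> \<open>agreement\<close>
        (\<forall>p\<in>{1..n}. \<forall>q\<in>{1..n}. \<forall>t t' d d'. dec A p (st (\<rho> t) p) = Some d \<longrightarrow>
            dec A q (st (\<rho> t') q) = Some d' \<longrightarrow> d = d') \<and>
        \<comment> \<open>validity\<close>
        (\<forall>p\<in>{1..n}. \<forall>t d. dec A p (st (\<rho> t) p) = Some d \<longrightarrow> d \<in> ConsP {1..n} F V))"

text \<open>Cons(n,f) is C-reducible to Cons(n+1,f) via algorithms with state type 's and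
  message type 'm (the theorem quantifies over all such types).\<close>

definition C_reducible_Cons_Cons_succ :: "'s itself \<Rightarrow> 'm itself \<Rightarrow> nat \<Rightarrow> nat \<Rightarrow> bool" where
  "C_reducible_Cons_Cons_succ _ _ n f \<longleftrightarrow>
     (\<exists>A :: ('s, 'm) algo. solves_Cons_with_oracle A n f (n + 1) f)"

end

theory Submission
  imports Defs
begin

(* Suppose A solves Cons(n,f) with the oracle for Cons(n+1,f), whose consultant n+1 never
   queries.  Crash the f-1 processes above nL = n+1-f from the start and let only
   L = {1..nL} (at least two processes) run.  The oracle owes an answer only once nL
   consultants have queried, i.e. all of L; answering "some query is 1" exactly then is always
   admissible.  So the oracle behaves like one more deterministic agent whose events commute
   with the steps of every process, and a single further crash in L silences it for good while
   keeping the number of faults at f.  This is the setting of the Fischer-Lynch-Paterson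
   argument: validity and agreement give a bivalent initial configuration; since the processes
   of L other than any p decide without p, every allowed event can be postponed to a point
   where it leads to a bivalent configuration; and a fair schedule built from such
   postponements is an admissible run in which no process ever decides. *)

lemma effect_Idle [simp]: "effect A c Idle = c"
  by (simp add: effect_def)

definition received :: "nat \<Rightarrow> 'm inp \<Rightarrow> (nat \<times> nat \<times> 'm) multiset" where
  "received p i = (case i of Msg q x \<Rightarrow> {#(q, p, x)#} | _ \<Rightarrow> {#})"

definition sent :: "('s, 'm) algo \<Rightarrow> nat \<Rightarrow> 's \<Rightarrow> 'm inp \<Rightarrow> (nat \<times> nat \<times> 'm) multiset" where
  "sent A p s i = mset (map (\<lambda>(d, x). (p, d, x)) (out A p s i))"

definition ng_after :: "'m inp \<Rightarrow> nat \<Rightarrow> nat" where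
  "ng_after i g = (case i of Resp _ \<Rightarrow> Suc g | _ \<Rightarrow> g)"

definition registers_query :: "('s, 'm) algo \<Rightarrow> nat \<Rightarrow> ('s, 'm) cfg \<Rightarrow> 'm inp \<Rightarrow> bool" where
  "registers_query A p c i \<longleftrightarrow> qry A p (st c p) i \<noteq> None \<and> ng_after i (ng c p) = nq c p"

lemma effect_PStep_simps:
  "st (effect A c (PStep p i)) = (st c)(p := nxt A p (st c p) i)"
  "net (effect A c (PStep p i)) = net c - received p i + sent A p (st c p) i"
  "ng (effect A c (PStep p i)) = (ng c)(p := ng_after i (ng c p))"
  "nq (effect A c (PStep p i)) =
     (if registers_query A p c i then (nq c)(p := Suc (nq c p)) else nq c)"
  "qv (effect A c (PStep p i)) =
     (if registers_query A p c i
      then (qv c)(nq c p := (qv c (nq c p))(p := qry A p (st c p) i)) else qv c)"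
  "rsp (effect A c (PStep p i)) = rsp c"
  "cfg.more (effect A c (PStep p i)) = cfg.more c"
  by (auto simp: effect_def Let_def received_def sent_def ng_after_def registers_query_def
      split: inp.splits option.splits)

lemma effect_ORespond_simps:
  "st (effect A c (ORespond k d)) = st c"
  "net (effect A c (ORespond k d)) = net c"
  "ng (effect A c (ORespond k d)) = ng c"
  "nq (effect A c (ORespond k d)) = nq c"
  "qv (effect A c (ORespond k d)) = qv c"
  "rsp (effect A c (ORespond k d)) = (rsp c)(k := Some d)"
  "cfg.more (effect A c (ORespond k d)) = cfg.more c"
  by (simp_all add: effect_def)

lemma ex_common_time:
  fixes Q :: "'a \<Rightarrow> nat \<Rightarrow> bool"
  assumes "finite K" and "\<forall>i\<in>K. \<exists>t. Q i t" and "\<And>i t t'. Q i t \<Longrightarrow> t \<le> t' \<Longrightarrow> Q i t'"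
  shows "\<exists>t. \<forall>i\<in>K. Q i t"
proof -
  have "\<forall>i\<in>K. eventually (Q i) sequentially"
  proof
    fix i
    assume "i \<in> K"
    then obtain t where "Q i t"
      using assms(2) by blast
    then show "eventually (Q i) sequentially"
      by (intro eventually_sequentiallyI[of t]) (rule assms(3))
  qed
  then have "eventually (\<lambda>t. \<forall>i\<in>K. Q i t) sequentially"
    by (rule eventually_ball_finite[OF assms(1)])
  then show ?thesis
    unfolding eventually_sequentially by blast
qed

lemma ex_nat_change: "g (0::nat) \<noteq> g n \<Longrightarrow> \<exists>j<n. g j \<noteq> g (Suc j)"
proof (induction n)
  case (Suc n)
  show ?case
  proof (cases "g 0 = g n")
    case True
    with Suc.prems show ?thesis
      by (intro exI[of _ n]) simp
  next
    case False
    then show ?thesis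
      using Suc.IH less_SucI by blast
  qed
qed simp

lemma ex_prefix_change:
  "g [] \<noteq> g xs \<Longrightarrow> \<exists>ys e zs. xs = ys @ e # zs \<and> g ys \<noteq> g (ys @ [e])"
proof (induction xs rule: rev_induct)
  case (snoc x xs)
  show ?case
  proof (cases "g [] = g xs")
    case True
    with snoc.prems show ?thesis
      by (intro exI[of _ xs] exI[of _ x] exI[of _ "[]"]) simp
  next
    case False
    then obtain ys e zs where "xs = ys @ e # zs" "g ys \<noteq> g (ys @ [e])"
      using snoc.IH by blast
    then show ?thesis
      by (intro exI[of _ ys] exI[of _ e] exI[of _ "zs @ [x]"]) simp
  qed
qed simp

lemma input_in_ConsP:
  assumes "i \<in> Pi"
  shows "V i \<in> ConsP Pi F V"
proof -
  have "(SOME i. i \<in> Pi) \<in> Pi"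
    using assms by (rule someI)
  then show ?thesis
    using assms unfolding ConsP_def by auto
qed

lemma ConsP_unanimous:
  assumes "x \<in> Pi" "\<forall>i\<in>Pi. V i = v"
  shows "ConsP Pi F V = {v}"
proof -
  have "(SOME i. i \<in> Pi) \<in> Pi"
    using assms(1) by (rule someI)
  then show ?thesis
    using assms(2) unfolding ConsP_def by auto
qed

section \<open>The system restricted to \<open>L\<close> and its commuting events\<close>

locale restricted_system =
  fixes A :: "('s, 'm) algo" and nL :: nat
begin

abbreviation L where "L \<equiv> {1..nL}"

text \<open>The oracle answers a consultation only once every process of \<open>L\<close> has queried it, so that
  its events commute with all process steps; the answer ``some query is 1'' is admissible
  (lemma \<open>allowed_enabled\<close>).\<close>

definition allowed :: "('s, 'm) cfg \<Rightarrow> 'm ev \<Rightarrow> bool" where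
  "allowed c e = (case e of
      PStep p i \<Rightarrow> p \<in> L \<and> (case i of NoInp \<Rightarrow> True
                  | Msg q x \<Rightarrow> (q, p, x) \<in># net c
                  | Resp d \<Rightarrow> ng c p < nq c p \<and> rsp c (ng c p) = Some d)
    | ORespond k d \<Rightarrow> rsp c k = None \<and> (k = 0 \<or> rsp c (k - 1) \<noteq> None) \<and>
         (\<forall>i\<in>L. qv c k i \<noteq> None) \<and> d = (\<exists>i\<in>L. qv c k i = Some True)
    | Idle \<Rightarrow> True)"

definition wf_cfg :: "('s, 'm) cfg \<Rightarrow> bool" where
  "wf_cfg c \<longleftrightarrow> (\<forall>p j. qv c j p \<noteq> None \<longleftrightarrow> j < nq c p) \<and> (\<forall>p. ng c p \<le> nq c p) \<and>
     (\<forall>p j. j < ng c p \<longrightarrow> rsp c j \<noteq> None) \<and>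
     (\<forall>k j. rsp c k \<noteq> None \<longrightarrow> j < k \<longrightarrow> rsp c j \<noteq> None) \<and>
     (\<forall>j p. qv c j p \<noteq> None \<longrightarrow> p \<in> L)"

lemma wf_cfg_init: "wf_cfg (init_cfg A V)"
  by (simp add: wf_cfg_def init_cfg_def)

lemma wf_cfg_qv: "wf_cfg c \<Longrightarrow> qv c j p \<noteq> None \<longleftrightarrow> j < nq c p"
  by (simp add: wf_cfg_def)

lemma wf_cfg_effect:
  assumes wf: "wf_cfg c" and en: "allowed c e"
  shows "wf_cfg (effect A c e)"
proof (cases e)
  case (PStep p i)
  have "p \<in> L" using en by (simp add: allowed_def PStep)
  moreover have "ng c p < nq c p" and "j \<le> ng c p \<Longrightarrow> rsp c j \<noteq> None" if "i = Resp d" for d j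
    using en wf that by (auto simp: allowed_def PStep wf_cfg_def le_less)
  ultimately show ?thesis using wf
    by (cases i) (auto simp: PStep effect_PStep_simps wf_cfg_def ng_after_def registers_query_def
        less_Suc_eq split: if_splits)
next
  case (ORespond k d)
  have "rsp c j \<noteq> None" if "j < k" for j
    using en wf that less_Suc_eq[of j "k - 1"]
    by (auto simp: ORespond allowed_def wf_cfg_def)
  then show ?thesis using wf
    by (auto simp: ORespond effect_ORespond_simps wf_cfg_def)
qed (use wf in simp)

definition same_agent :: "'m ev \<Rightarrow> 'm ev \<Rightarrow> bool" where
  "same_agent e1 e2 \<longleftrightarrow> (\<exists>p i j. e1 = PStep p i \<and> e2 = PStep p j) \<or>
     (\<exists>k d k' d'. e1 = ORespond k d \<and> e2 = ORespond k' d')"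

lemma same_agent_sym: "same_agent e1 e2 \<longleftrightarrow> same_agent e2 e1"
  unfolding same_agent_def by blast

lemma allowed_PStep_commute:
  assumes en_p: "allowed c (PStep p i)" and en_q: "allowed c (PStep q j)" and "p \<noteq> q"
  shows "allowed (effect A c (PStep p i)) (PStep q j)"
    and "effect A (effect A c (PStep p i)) (PStep q j) = effect A (effect A c (PStep q j)) (PStep p i)"
proof -
  show "allowed (effect A c (PStep p i)) (PStep q j)"
    using assms by (auto simp: allowed_def effect_PStep_simps received_def in_diff_count
        split: inp.splits)
  have "received p i + received q j \<subseteq># net c"
    using assms by (auto simp: allowed_def received_def insert_subset_eq_iff in_diff_count
        split: inp.splits)
  then obtain M where "net c = M + received p i + received q j"
    by (metis subset_mset.add_diff_inverse add.commute add.assoc)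
  then have "net c - received p i + sent A p s i - received q j + sent A q s' j =
             net c - received q j + sent A q s' j - received p i + sent A p s i" for s s'
    by (simp add: add.commute add.left_commute)
  with \<open>p \<noteq> q\<close> show "effect A (effect A c (PStep p i)) (PStep q j) =
      effect A (effect A c (PStep q j)) (PStep p i)"
    by (intro cfg.equality) (simp_all add: effect_PStep_simps registers_query_def fun_upd_twist)
qed

lemma allowed_PStep_ORespond_commute:
  assumes wf: "wf_cfg c" and en_p: "allowed c (PStep p i)" and en_o: "allowed c (ORespond k d)"
  shows "allowed (effect A c (PStep p i)) (ORespond k d)"
    and "allowed (effect A c (ORespond k d)) (PStep p i)"
    and "effect A (effect A c (PStep p i)) (ORespond k d) =
         effect A (effect A c (ORespond k d)) (PStep p i)"
proof -
  \<comment> \<open>\<open>p\<close> has already queried in consultation \<open>k\<close>, so its step leaves that consultation alone\<close>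
  have "k < nq c p"
    using en_p en_o wf_cfg_qv[OF wf] by (auto simp: allowed_def)
  then have "qv (effect A c (PStep p i)) k = qv c k"
    by (simp add: effect_PStep_simps)
  then show "allowed (effect A c (PStep p i)) (ORespond k d)"
    using en_o by (simp add: allowed_def effect_PStep_simps)
  show "allowed (effect A c (ORespond k d)) (PStep p i)"
    using en_p en_o by (auto simp: allowed_def effect_ORespond_simps split: inp.splits)
  show "effect A (effect A c (PStep p i)) (ORespond k d) =
        effect A (effect A c (ORespond k d)) (PStep p i)"
    by (intro cfg.equality) (simp_all add: effect_PStep_simps effect_ORespond_simps
        registers_query_def)
qed

lemma allowed_Idle [simp]: "allowed c Idle"
  by (simp add: allowed_def)

lemma allowed_ORespond_unique:
  assumes wf: "wf_cfg c" and en: "allowed c (ORespond k d)" and en': "allowed c (ORespond k' d')"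
  shows "k = k' \<and> d = d'"
proof -
  \<comment> \<open>only the first unanswered consultation can be answered\<close>
  have "\<not> k < k'" if "allowed c (ORespond k d)" "allowed c (ORespond k' d')" for k d k' d'
  proof
    assume "k < k'"
    then have "k = k' - 1 \<or> k < k' - 1" by linarith
    moreover have "rsp c (k' - 1) \<noteq> None" "rsp c k = None"
      using that \<open>k < k'\<close> by (auto simp: allowed_def)
    moreover have "rsp c j \<noteq> None" if "rsp c k'' \<noteq> None" "j < k''" for j k''
      using wf that by (simp add: wf_cfg_def)
    ultimately show False
      by blast
  qed
  then have "k = k'"
    using en en' by (meson linorder_neqE_nat)
  then show ?thesis
    using en en' by (simp add: allowed_def)
qed

lemma allowed_commute:
  assumes wf: "wf_cfg c" and en1: "allowed c e1" and en2: "allowed c e2"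
    and "\<not> same_agent e1 e2"
  shows "allowed (effect A c e1) e2"
    and "effect A (effect A c e1) e2 = effect A (effect A c e2) e1"
  using assms allowed_PStep_commute[of c] allowed_PStep_ORespond_commute[OF wf]
  by (cases e1; cases e2; simp add: same_agent_def; blast)+

lemma allowed_persists:
  assumes wf: "wf_cfg c" and en: "allowed c e" and en': "allowed c e'" and "e' \<noteq> e"
  shows "allowed (effect A c e') e"
proof (cases "same_agent e' e")
  case False
  then show ?thesis using allowed_commute(1)[OF wf en' en] by simp
next
  case True
  then consider (P) p i j where "e' = PStep p i" "e = PStep p j"
    | (O) k d k' d' where "e' = ORespond k d" "e = ORespond k' d'"
    by (auto simp: same_agent_def)
  then show ?thesis
  proof cases
    case P
    \<comment> \<open>two different response steps of \<open>p\<close> are never allowed together\<close>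
    then show ?thesis using assms
      by (cases j; cases i) (auto simp: allowed_def effect_PStep_simps received_def in_diff_count
          ng_after_def)
  next
    case O
    then show ?thesis using allowed_ORespond_unique[OF wf] en en' \<open>e' \<noteq> e\<close> by blast
  qed
qed

definition steps_within :: "nat set \<Rightarrow> 'm ev \<Rightarrow> bool" where
  "steps_within P e \<longleftrightarrow> (\<forall>p i. e = PStep p i \<longrightarrow> p \<in> P)"

fun exec :: "('s, 'm) cfg \<Rightarrow> 'm ev list \<Rightarrow> ('s, 'm) cfg" where
  "exec c [] = c"
| "exec c (e # es) = exec (effect A c e) es"

fun applicable :: "('s, 'm) cfg \<Rightarrow> 'm ev list \<Rightarrow> bool" where
  "applicable c [] = True"
| "applicable c (e # es) \<longleftrightarrow> allowed c e \<and> applicable (effect A c e) es"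

lemma exec_append [simp]: "exec c (xs @ ys) = exec (exec c xs) ys"
  by (induction xs arbitrary: c) auto

lemma applicable_append [simp]:
  "applicable c (xs @ ys) \<longleftrightarrow> applicable c xs \<and> applicable (exec c xs) ys"
  by (induction xs arbitrary: c) auto

lemma wf_cfg_exec: "wf_cfg c \<Longrightarrow> applicable c xs \<Longrightarrow> wf_cfg (exec c xs)"
  by (induction xs arbitrary: c) (auto simp: wf_cfg_effect)

lemma applicable_PStep_in_L: "applicable c xs \<Longrightarrow> PStep p i \<in> set xs \<Longrightarrow> p \<in> L"
  by (induction xs arbitrary: c) (auto simp: allowed_def)

lemma commute_past_exec:
  assumes "wf_cfg c" "applicable c xs" "\<forall>e' \<in> set xs. \<not> same_agent e e'" "allowed c e"
  shows "applicable (effect A c e) xs \<and> allowed (exec c xs) e \<and>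
    exec (effect A c e) xs = effect A (exec c xs) e"
  using assms
proof (induction xs arbitrary: c)
  case Nil
  then show ?case by simp
next
  case (Cons e' xs)
  then have "allowed c e'" "\<not> same_agent e e'" "\<not> same_agent e' e"
    by (auto simp: same_agent_sym)
  with Cons.prems show ?case
    using Cons.IH[OF wf_cfg_effect] allowed_commute[of c e e'] allowed_commute(1)[of c e' e]
    by auto
qed

lemma allowed_persists_exec:
  "wf_cfg c \<Longrightarrow> applicable c xs \<Longrightarrow> e \<notin> set xs \<Longrightarrow> allowed c e \<Longrightarrow> allowed (exec c xs) e"
  by (induction xs arbitrary: c) (auto simp: allowed_persists wf_cfg_effect)

definition reach :: "('s, 'm) cfg \<Rightarrow> ('s, 'm) cfg \<Rightarrow> bool" where
  "reach c c' \<longleftrightarrow> (\<exists>xs. applicable c xs \<and> exec c xs = c')"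

lemma reach_trans: "reach a b \<Longrightarrow> reach b c \<Longrightarrow> reach a c"
  unfolding reach_def by (metis applicable_append exec_append)

lemma reach_effect: "allowed c e \<Longrightarrow> reach c (effect A c e)"
  unfolding reach_def by (rule exI[of _ "[e]"]) simp

lemma reach_postponed:
  assumes "wf_cfg c" "applicable c xs" "e \<notin> set xs" "allowed c e"
  shows "reach c (effect A (exec c xs) e)"
proof -
  have "reach c (exec c xs)"
    using assms(2) unfolding reach_def by blast
  then show ?thesis
    using reach_trans reach_effect allowed_persists_exec[OF assms] by blast
qed

definition agree_except :: "nat \<Rightarrow> ('s, 'm) cfg \<Rightarrow> ('s, 'm) cfg \<Rightarrow> bool" where
  "agree_except p c c' \<longleftrightarrow> (\<forall>q. q \<noteq> p \<longrightarrow> st c q = st c' q) \<and> net c = net c' \<and>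
     ng c = ng c' \<and> nq c = nq c' \<and> qv c = qv c' \<and> rsp c = rsp c'"

definition step_of :: "nat \<Rightarrow> 'm ev \<Rightarrow> bool" where
  "step_of p e \<longleftrightarrow> (\<exists>i. e = PStep p i)"

lemma agree_except_effect:
  assumes "agree_except p c c'" "allowed c e" "\<not> step_of p e"
  shows "allowed c' e \<and> agree_except p (effect A c e) (effect A c' e)"
proof (cases e)
  case (PStep q i)
  then have "st c q = st c' q"
    using assms(1,3) by (auto simp: agree_except_def step_of_def)
  with assms PStep show ?thesis
    by (auto simp: agree_except_def allowed_def effect_PStep_simps registers_query_def
        split: inp.splits)
next
  case (ORespond k d)
  with assms show ?thesis
    by (simp add: agree_except_def allowed_def effect_ORespond_simps)
qed (use assms in simp)

lemma agree_except_exec: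
  "agree_except p c c' \<Longrightarrow> applicable c xs \<Longrightarrow> \<forall>e \<in> set xs. \<not> step_of p e \<Longrightarrow>
    applicable c' xs \<and> agree_except p (exec c xs) (exec c' xs)"
  by (induction xs arbitrary: c c') (auto dest: agree_except_effect)

lemma rsp_effect: "allowed c e \<Longrightarrow> rsp c k = Some d \<Longrightarrow> rsp (effect A c e) k = Some d"
  by (cases e) (auto simp: effect_PStep_simps effect_ORespond_simps allowed_def)

lemma qv_effect:
  assumes "wf_cfg c" "qv c k i \<noteq> None"
  shows "qv (effect A c e) k i = qv c k i"
proof -
  have "qv c (nq c p) p = None" for p
    using wf_cfg_qv[OF assms(1), of "nq c p" p] by simp
  with assms(2) show ?thesis
    by (cases e) (auto simp: effect_PStep_simps effect_ORespond_simps)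
qed

lemma ng_effect_mono: "ng c p \<le> ng (effect A c e) p"
  by (cases e) (auto simp: effect_PStep_simps effect_ORespond_simps ng_after_def split: inp.splits)

lemma ng_effect_Resp: "ng (effect A c (PStep p (Resp d))) p = Suc (ng c p)"
  by (simp add: effect_PStep_simps ng_after_def)

end

section \<open>Fair schedules\<close>

text \<open>A round-robin scheduler for the processes \<open>P\<close> that runs the detour \<open>X c e\<close>, ending in
  \<open>e\<close>, in place of each obligation \<open>e\<close>.  The detours are the hook for the final argument, which
  uses them to stay among bivalent configurations (the invariant \<open>I\<close>); elsewhere \<open>X c e = [e]\<close>.\<close>

locale fair_schedule = restricted_system A nL for A :: "('s, 'm) algo" and nL :: nat +
  fixes c0 :: "('s, 'm) cfg" and P :: "nat set"
    and X :: "('s, 'm) cfg \<Rightarrow> 'm ev \<Rightarrow> 'm ev list" and I :: "('s, 'm) cfg \<Rightarrow> bool"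
  assumes wf_c0: "wf_cfg c0" and I_c0: "I c0" and P_sub_L: "P \<subseteq> L"
    and X_detour: "\<And>c e. wf_cfg c \<Longrightarrow> I c \<Longrightarrow> allowed c e \<Longrightarrow> steps_within P e \<Longrightarrow>
       applicable c (X c e) \<and> (\<forall>e' \<in> set (X c e). steps_within P e') \<and> I (exec c (X c e)) \<and>
       X c e \<noteq> [] \<and> last (X c e) = e"
begin

lemma finite_P: "finite P"
  using P_sub_L finite_subset by blast

definition msgs_to :: "('s, 'm) cfg \<Rightarrow> nat \<Rightarrow> (nat \<times> 'm) set" where
  "msgs_to c p = {(q, x). (q, p, x) \<in># net c}"

lemma finite_msgs_to: "finite (msgs_to c p)"
proof -
  have "msgs_to c p \<subseteq> (\<lambda>(q, d, x). (q, x)) ` set_mset (net c)"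
    unfolding msgs_to_def by force
  then show ?thesis
    by (rule finite_subset) simp
qed

definition deliveries :: "('s, 'm) cfg \<Rightarrow> nat \<Rightarrow> 'm ev list" where
  "deliveries c p = map (\<lambda>(q, x). PStep p (Msg q x)) (SOME xs. set xs = msgs_to c p)"

lemma set_deliveries: "set (deliveries c p) = (\<lambda>(q, x). PStep p (Msg q x)) ` msgs_to c p"
proof -
  have "set (SOME xs. set xs = msgs_to c p) = msgs_to c p"
    by (rule someI_ex) (simp add: finite_list finite_msgs_to)
  then show ?thesis
    unfolding deliveries_def by simp
qed

definition response_delivery :: "('s, 'm) cfg \<Rightarrow> nat \<Rightarrow> 'm ev list" where
  "response_delivery c p = (if ng c p < nq c p \<and> rsp c (ng c p) \<noteq> None
     then [PStep p (Resp (the (rsp c (ng c p))))] else [])"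

definition oracle_event :: "('s, 'm) cfg \<Rightarrow> 'm ev" where
  "oracle_event c = (SOME e. \<exists>k d. e = ORespond k d \<and> allowed c e)"

lemma oracle_event_allowed:
  "allowed c (ORespond k d) \<Longrightarrow> \<exists>k d. oracle_event c = ORespond k d \<and> allowed c (oracle_event c)"
  unfolding oracle_event_def by (rule someI_ex) auto

definition obligations :: "('s, 'm) cfg \<Rightarrow> 'm ev list" where
  "obligations c = (if \<exists>k d. allowed c (ORespond k d) then [oracle_event c] else []) @
     concat (map (\<lambda>p. response_delivery c p @ deliveries c p @ [PStep p NoInp])
       (sorted_list_of_set P))"

lemma set_obligations:
  "set (obligations c) = (if \<exists>k d. allowed c (ORespond k d) then {oracle_event c} else {}) \<union>
     (\<Union>p\<in>P. set (response_delivery c p) \<union> set (deliveries c p) \<union> {PStep p NoInp})"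
  using finite_P by (auto simp: obligations_def)

lemma obligations_allowed: "e \<in> set (obligations c) \<Longrightarrow> allowed c e \<and> steps_within P e"
  using P_sub_L oracle_event_allowed
  by (fastforce simp: set_obligations response_delivery_def set_deliveries msgs_to_def
      steps_within_def allowed_def split: if_splits)

text \<open>The scheduler state is the configuration, the remaining events of the current detour
  and the remaining obligations of the current round.\<close>

fun sched_step :: "('s, 'm) cfg \<times> 'm ev list \<times> 'm ev list \<Rightarrow> ('s, 'm) cfg \<times> 'm ev list \<times> 'm ev list"
  where
  "sched_step (c, e # pend, obl) = (effect A c e, pend, obl)"
| "sched_step (c, [], e # obl) = (c, if allowed c e then X c e else [], obl)"
| "sched_step (c, [], []) = (c, [], obligations c)"

fun sched_event :: "('s, 'm) cfg \<times> 'm ev list \<times> 'm ev list \<Rightarrow> 'm ev" where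
  "sched_event (c, e # pend, obl) = e"
| "sched_event (c, [], obl) = Idle"

definition sched :: "nat \<Rightarrow> ('s, 'm) cfg \<times> 'm ev list \<times> 'm ev list" where
  "sched t = (sched_step ^^ t) (c0, [], [])"

lemma sched_0: "sched 0 = (c0, [], [])"
  by (simp add: sched_def)

lemma sched_Suc: "sched (Suc t) = sched_step (sched t)"
  by (simp add: sched_def)

lemma fst_sched_Suc: "fst (sched (Suc t)) = effect A (fst (sched t)) (sched_event (sched t))"
  unfolding sched_Suc by (cases "sched t" rule: sched_step.cases) auto

definition sched_inv :: "('s, 'm) cfg \<times> 'm ev list \<times> 'm ev list \<Rightarrow> bool" where
  "sched_inv s \<longleftrightarrow> (case s of (c, pend, obl) \<Rightarrow> wf_cfg c \<and> applicable c pend \<and>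
      (\<forall>e\<in>set pend. steps_within P e) \<and> I (exec c pend) \<and> (\<forall>e\<in>set obl. steps_within P e))"

lemma sched_inv_step: "sched_inv s \<Longrightarrow> sched_inv (sched_step s)"
  using X_detour obligations_allowed
  by (cases s rule: sched_step.cases) (auto simp: sched_inv_def wf_cfg_effect)

lemma sched_inv: "sched_inv (sched t)"
proof (induction t)
  case 0
  show ?case
    using wf_c0 I_c0 by (simp add: sched_0 sched_inv_def)
next
  case (Suc t)
  then show ?case
    by (simp add: sched_Suc sched_inv_step)
qed

lemma sched_event_allowed:
  "allowed (fst (sched t)) (sched_event (sched t)) \<and> steps_within P (sched_event (sched t)) \<and>
   wf_cfg (fst (sched t))"
  using sched_inv[of t]
  by (cases "sched t" rule: sched_event.cases) (auto simp: sched_inv_def steps_within_def)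

lemma sched_detour:
  assumes "sched t = (c, pend, obl)"
  shows "(\<forall>j < length pend. sched_event (sched (t + j)) = pend ! j) \<and>
    sched (t + length pend) = (exec c pend, [], obl)"
  using assms
proof (induction pend arbitrary: t c)
  case Nil
  then show ?case by simp
next
  case (Cons e pend)
  then have "sched (Suc t) = (effect A c e, pend, obl)"
    by (simp add: sched_Suc)
  note IH = Cons.IH[OF this]
  show ?case
  proof (intro conjI allI impI)
    fix j
    assume "j < length (e # pend)"
    then show "sched_event (sched (t + j)) = (e # pend) ! j"
      using IH Cons.prems by (cases j) auto
  qed (use IH in simp)
qed

lemma sched_round_end: "\<exists>t' \<ge> t. \<exists>c. sched t' = (c, [], [])"
proof -
  have "\<exists>t' \<ge> t. \<exists>c. sched t' = (c, [], [])" if "sched t = (c, [], obl)" for t c obl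
    using that
  proof (induction obl arbitrary: t c)
    case (Cons e obl)
    define pend where "pend = (if allowed c e then X c e else [])"
    have "sched (Suc t) = (c, pend, obl)"
      using Cons.prems by (simp add: sched_Suc pend_def)
    then have "sched (Suc t + length pend) = (exec c pend, [], obl)"
      using sched_detour by blast
    from Cons.IH[OF this] show ?case
      by (meson le_add1 order_trans Suc_leD)
  qed blast
  moreover obtain c pend obl where "sched t = (c, pend, obl)"
    by (cases "sched t")
  ultimately show ?thesis
    using sched_detour by (meson le_add1 order_trans)
qed

lemma allowed_sched_persists:
  assumes "allowed (fst (sched a)) e" "\<forall>t. a \<le> t \<longrightarrow> t < b \<longrightarrow> sched_event (sched t) \<noteq> e" "a \<le> b"
  shows "allowed (fst (sched b)) e"
  using assms(3,2)
proof (induction b rule: dec_induct)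
  case base
  then show ?case using assms(1) by simp
next
  case (step b)
  then show ?case
    using allowed_persists[of "fst (sched b)" e "sched_event (sched b)"] sched_event_allowed[of b]
    by (simp add: fst_sched_Suc)
qed

text \<open>An obligation is either executed at the end of its detour, or it was disabled before its
  turn, which only happens by scheduling it.\<close>

lemma remaining_obligations_scheduled:
  assumes "sched t = (c, [], obl)" "t0 \<le> t" "\<forall>e \<in> set obl. allowed (fst (sched t0)) e"
  shows "\<forall>e \<in> set obl. \<exists>t' \<ge> t0. sched_event (sched t') = e"
  using assms
proof (induction obl arbitrary: t c)
  case (Cons e obl)
  define pend where "pend = (if allowed c e then X c e else [])"
  have pend: "sched (Suc t) = (c, pend, obl)"
    using Cons.prems by (simp add: sched_Suc pend_def)
  then have "sched (Suc t + length pend) = (exec c pend, [], obl)"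
    using sched_detour by blast
  with Cons.IH Cons.prems(2,3) have rest: "\<forall>e \<in> set obl. \<exists>t' \<ge> t0. sched_event (sched t') = e"
    by auto
  have "\<exists>t' \<ge> t0. sched_event (sched t') = e"
  proof (cases "allowed c e")
    case True
    have "wf_cfg c" "I c" "steps_within P e"
      using sched_inv[of t] Cons.prems(1) by (auto simp: sched_inv_def)
    with True have "pend \<noteq> [] \<and> last pend = e"
      using X_detour by (simp add: pend_def)
    then have "length pend - 1 < length pend" "pend ! (length pend - 1) = e"
      by (auto simp: last_conv_nth)
    then have "sched_event (sched (Suc t + (length pend - 1))) = e"
      using sched_detour[OF pend] by metis
    then show ?thesis
      using Cons.prems(2) by (metis le_SucI le_add1 order_trans add_Suc)
  next
    case False
    then show ?thesis
      using allowed_sched_persists[of t0 e t] Cons.prems by auto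
  qed
  with rest show ?case
    by simp
qed simp

lemma obligations_scheduled:
  assumes "sched t0 = (c, [], [])" "e \<in> set (obligations c)"
  shows "\<exists>t \<ge> t0. sched_event (sched t) = e"
proof -
  have "sched (Suc t0) = (c, [], obligations c)"
    using assms(1) by (simp add: sched_Suc)
  then show ?thesis
    using remaining_obligations_scheduled[of "Suc t0" c _ t0] assms obligations_allowed by force
qed

end

section \<open>Admissible runs with at most one crash in \<open>L\<close>\<close>

locale reduction = restricted_system A nL for A :: "('s, 'm) algo" and nL :: nat +
  fixes n f :: nat
  assumes one_le_f: "1 \<le> f" and f_le: "f \<le> n - 1"
    and solves: "solves_Cons_with_oracle A n f (n + 1) f"
    and nL_eq: "nL = n + 1 - f"
begin

lemma nL_le_n: "nL \<le> n"
  using nL_eq one_le_f by simp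

lemma two_le_nL: "2 \<le> nL"
  using nL_eq one_le_f f_le by linarith

lemma allowed_enabled:
  assumes en: "allowed c e" and alive: "\<And>p i. e = PStep p i \<Longrightarrow> p \<notin> F t"
  shows "enabled n (n + 1) F t c e"
proof (cases e)
  case (PStep p i)
  then show ?thesis
    using en alive nL_le_n by (auto simp: enabled_def allowed_def split: inp.splits)
next
  case (ORespond k d)
  then have all_queried: "\<forall>i\<in>L. qv c k i \<noteq> None" and d: "d = (\<exists>i\<in>L. qv c k i = Some True)"
    using en by (auto simp: allowed_def)
  \<comment> \<open>the response is the query of some consultant, hence a valid consensus value\<close>
  obtain i0 where i0: "i0 \<in> L" "qv c k i0 = Some d"
  proof (cases d)
    case False
    have "1 \<in> L"
      using two_le_nL by simp
    moreover obtain b where "qv c k 1 = Some b"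
      using all_queried \<open>1 \<in> L\<close> by blast
    ultimately show ?thesis
      using d False that[of 1] by (cases b) auto
  qed (use d that in auto)
  have "d \<in> ConsP {1..n + 1} F' W"
    if "\<forall>i\<in>{1..n + 1}. \<forall>b. qv c k i = Some b \<longrightarrow> W i = b" for F' W
  proof -
    have "W i0 = d" "i0 \<in> {1..n + 1}"
      using that i0 nL_le_n by auto
    then show ?thesis
      using input_in_ConsP[of i0 "{1..n + 1}" W F'] by simp
  qed
  then show ?thesis
    using en ORespond by (simp add: enabled_def oracle_valid_def allowed_def)
qed (simp add: enabled_def)

end

locale fair_run =
  reduction A nL n f + fair_schedule A nL "exec (init_cfg A V) \<sigma>" P X I
  for A :: "('s, 'm) algo" and nL n f :: nat and V :: "nat \<Rightarrow> bool" and \<sigma> :: "'m ev list"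
    and P :: "nat set" and X :: "('s, 'm) cfg \<Rightarrow> 'm ev \<Rightarrow> 'm ev list"
    and I :: "('s, 'm) cfg \<Rightarrow> bool" +
  assumes applicable_prefix: "applicable (init_cfg A V) \<sigma>" and one_crash: "card (L - P) \<le> 1"
begin

abbreviation T where "T \<equiv> length \<sigma>"

definition E :: "nat \<Rightarrow> 'm ev" where
  "E t = (if t < T then \<sigma> ! t else sched_event (sched (t - T)))"

definition \<rho> :: "nat \<Rightarrow> ('s, 'm) cfg" where
  "\<rho> t = exec (init_cfg A V) (map E [0..<t])"

lemma \<rho>_0: "\<rho> 0 = init_cfg A V"
  by (simp add: \<rho>_def)

lemma \<rho>_Suc: "\<rho> (Suc t) = effect A (\<rho> t) (E t)"
  by (simp add: \<rho>_def)

lemma \<rho>_prefix: "t \<le> T \<Longrightarrow> \<rho> t = exec (init_cfg A V) (take t \<sigma>)"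
proof -
  assume "t \<le> T"
  then have "map E [0..<t] = take t \<sigma>"
    by (intro nth_equalityI) (auto simp: E_def)
  then show ?thesis
    by (simp add: \<rho>_def)
qed

lemma \<rho>_sched: "\<rho> (T + t) = fst (sched t)"
proof (induction t)
  case 0
  then show ?case
    using \<rho>_prefix[of T] by (simp add: sched_0)
next
  case (Suc t)
  then show ?case
    using \<rho>_Suc[of "T + t"] by (simp add: E_def fst_sched_Suc)
qed

lemma E_allowed: "allowed (\<rho> t) (E t) \<and> wf_cfg (\<rho> t) \<and> (T \<le> t \<longrightarrow> steps_within P (E t))"
proof (cases "t < T")
  case True
  have "applicable (init_cfg A V) (take t \<sigma> @ \<sigma> ! t # drop (Suc t) \<sigma>)"
    using applicable_prefix True by (simp add: Cons_nth_drop_Suc)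
  then show ?thesis
    using True \<rho>_prefix[of t] wf_cfg_exec[OF wf_cfg_init] by (simp add: E_def)
next
  case False
  then obtain u where "t = T + u"
    by (metis le_add_diff_inverse not_less)
  then show ?thesis
    using sched_event_allowed[of u] \<rho>_sched[of u] by (simp add: E_def)
qed

lemma exec_segment:
  "a \<le> b \<Longrightarrow> applicable (\<rho> a) (map E [a..<b]) \<and> exec (\<rho> a) (map E [a..<b]) = \<rho> b"
proof (induction b rule: dec_induct)
  case (step b)
  then show ?case
    using E_allowed[of b] \<rho>_Suc[of b] by simp
qed simp

lemma segment_steps_within: "T \<le> a \<Longrightarrow> e \<in> set (map E [a..<b]) \<Longrightarrow> steps_within P e"
  using E_allowed by auto

lemma \<rho>_invariant:
  assumes "\<And>c e. wf_cfg c \<Longrightarrow> allowed c e \<Longrightarrow> Q c \<Longrightarrow> Q (effect A c e)" "Q (\<rho> a)" "a \<le> b"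
  shows "Q (\<rho> b)"
  using assms(3)
proof (induction b rule: dec_induct)
  case (step b)
  then show ?case
    using assms(1)[of "\<rho> b" "E b"] E_allowed[of b] \<rho>_Suc[of b] by simp
qed (rule assms(2))

lemma allowed_\<rho>_persists:
  assumes "allowed (\<rho> a) e" "\<forall>t. a \<le> t \<longrightarrow> t < b \<longrightarrow> E t \<noteq> e" "a \<le> b"
  shows "allowed (\<rho> b) e"
  using assms(3,2)
proof (induction b rule: dec_induct)
  case base
  then show ?case using assms(1) by simp
next
  case (step b)
  then show ?case
    using allowed_persists[of "\<rho> b" e "E b"] E_allowed[of b] \<rho>_Suc[of b] by simp
qed

lemma round_end: "\<exists>t0 c. t \<le> T + t0 \<and> sched t0 = (c, [], []) \<and> \<rho> (T + t0) = c"
proof -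
  obtain t0 c where "t0 \<ge> t" "sched t0 = (c, [], [])"
    using sched_round_end[of t] by blast
  then show ?thesis
    using \<rho>_sched[of t0] by (intro exI[of _ t0] exI[of _ c]) auto
qed

lemma obligation_occurs:
  assumes "sched t0 = (c, [], [])" "e \<in> set (obligations c)"
  shows "\<exists>t \<ge> T + t0. E t = e"
proof -
  obtain t where "t \<ge> t0" "sched_event (sched t) = e"
    using obligations_scheduled[OF assms] by blast
  then show ?thesis
    by (intro exI[of _ "T + t"]) (simp add: E_def)
qed

lemma I_round_end: "sched t0 = (c, [], []) \<Longrightarrow> I c"
  using sched_inv[of t0] by (simp add: sched_inv_def)

definition crashes :: "nat \<Rightarrow> nat set" where
  "crashes t = {nL + 1..n} \<union> (if T \<le> t then L - P else {})"

lemma failure_pattern_crashes: "failure_pattern {1..n} crashes"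
  unfolding failure_pattern_def crashes_def mono_def using nL_le_n by auto

lemma Faulty_crashes: "Faulty crashes = {nL + 1..n} \<union> (L - P)"
  unfolding Faulty_def crashes_def by (auto split: if_splits)

lemma card_Faulty_crashes: "card (Faulty crashes) \<le> f"
proof -
  have "card (Faulty crashes) \<le> card {nL + 1..n} + card (L - P)"
    unfolding Faulty_crashes by (rule card_Un_le)
  also have "card {nL + 1..n} = f - 1"
    using nL_eq f_le one_le_f by simp
  finally show ?thesis
    using one_crash one_le_f by linarith
qed

lemma correct_crashes: "correct n crashes = P"
  unfolding correct_def Faulty_crashes using P_sub_L nL_le_n by auto

lemma E_enabled: "enabled n (n + 1) crashes t (\<rho> t) (E t)"
proof (rule allowed_enabled)
  show "allowed (\<rho> t) (E t)"
    using E_allowed by blast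
  fix p i
  assume "E t = PStep p i"
  moreover have "p \<in> L" if "E t = PStep p i"
    using E_allowed[of t] that by (simp add: allowed_def)
  ultimately show "p \<notin> crashes t"
    using E_allowed[of t] by (auto simp: crashes_def steps_within_def)
qed

lemma correct_steps_infinitely: "p \<in> P \<Longrightarrow> \<exists>t' \<ge> t. \<exists>i. E t' = PStep p i"
proof -
  assume "p \<in> P"
  obtain t0 c where "t \<le> T + t0" "sched t0 = (c, [], [])"
    using round_end[of t] by blast
  moreover have "PStep p NoInp \<in> set (obligations c)"
    using \<open>p \<in> P\<close> by (auto simp: set_obligations)
  ultimately show ?thesis
    using obligation_occurs by (meson order_trans)
qed

lemma messages_delivered:
  assumes p: "p \<in> P" and m: "(q, p, x) \<in># net (\<rho> t)"
  shows "\<exists>t' \<ge> t. E t' = PStep p (Msg q x)"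
proof (rule ccontr)
  assume not_delivered: "\<not> ?thesis"
  obtain t0 c where t0: "t \<le> T + t0" "sched t0 = (c, [], [])" "\<rho> (T + t0) = c"
    using round_end[of t] by blast
  have "allowed (\<rho> t) (PStep p (Msg q x))"
    using m p P_sub_L by (auto simp: allowed_def)
  then have "allowed c (PStep p (Msg q x))"
    using allowed_\<rho>_persists t0 not_delivered by auto
  then have "PStep p (Msg q x) \<in> set (obligations c)"
    using p by (auto simp: set_obligations set_deliveries msgs_to_def allowed_def)
  then show False
    using obligation_occurs[OF t0(2)] t0(1) not_delivered by force
qed

lemma qv_\<rho>_mono: "qv (\<rho> a) k i \<noteq> None \<Longrightarrow> a \<le> b \<Longrightarrow> qv (\<rho> b) k i \<noteq> None"
  using \<rho>_invariant[of "\<lambda>c. qv c k i \<noteq> None" a b] qv_effect by auto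

lemma rsp_\<rho>_mono: "rsp (\<rho> a) k \<noteq> None \<Longrightarrow> a \<le> b \<Longrightarrow> rsp (\<rho> b) k \<noteq> None"
  using \<rho>_invariant[of "\<lambda>c. rsp c k \<noteq> None" a b] rsp_effect by fastforce

lemma ng_\<rho>_mono: "a \<le> b \<Longrightarrow> ng (\<rho> a) p \<le> ng (\<rho> b) p"
  using \<rho>_invariant[of "\<lambda>c. ng (\<rho> a) p \<le> ng c p" a b] ng_effect_mono order_trans by blast

lemma oracle_answers_round:
  assumes "sched t0 = (c, [], [])" "allowed c (ORespond k d)"
  shows "\<exists>t. rsp (\<rho> t) k \<noteq> None"
proof -
  obtain k' d' where o: "oracle_event c = ORespond k' d'" "allowed c (oracle_event c)"
    using oracle_event_allowed[OF assms(2)] by blast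
  have "k' = k"
    using allowed_ORespond_unique[OF _ assms(2)] o E_allowed[of "T + t0"] \<rho>_sched assms(1)
    by (metis fst_conv)
  moreover have "oracle_event c \<in> set (obligations c)"
    using assms(2) by (auto simp: set_obligations)
  then obtain t where "E t = oracle_event c"
    using obligation_occurs[OF assms(1)] by blast
  ultimately have "rsp (\<rho> (Suc t)) k = Some d'"
    using o by (simp add: \<rho>_Suc effect_ORespond_simps)
  then show ?thesis
    by blast
qed

lemma qv_\<rho>_earlier: "qv (\<rho> t) k i \<noteq> None \<Longrightarrow> j \<le> k \<Longrightarrow> qv (\<rho> t) j i \<noteq> None"
  using E_allowed[of t] wf_cfg_qv[of "\<rho> t"] by (meson le_less_trans)

text \<open>Once all of \<open>L\<close> queried consultation \<open>j\<close> and consultation \<open>j - 1\<close> is answered, the oracle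
  event for \<open>j\<close> stays allowed until it occurs.\<close>

lemma consultation_answered:
  assumes all_queried: "\<And>t i. tq \<le> t \<Longrightarrow> i \<in> L \<Longrightarrow> qv (\<rho> t) j i \<noteq> None"
    and previous: "j = 0 \<or> rsp (\<rho> tp) (j - 1) \<noteq> None"
  shows "\<exists>t. rsp (\<rho> t) j \<noteq> None"
proof -
  obtain t0 c where t0: "max tp tq \<le> T + t0" "sched t0 = (c, [], [])" "\<rho> (T + t0) = c"
    using round_end[of "max tp tq"] by blast
  show ?thesis
  proof (cases "rsp c j = None")
    case True
    have "\<forall>i\<in>L. qv c j i \<noteq> None"
      using all_queried[of "T + t0"] t0 by auto
    moreover have "j = 0 \<or> rsp c (j - 1) \<noteq> None"
      using previous rsp_\<rho>_mono[of tp "j - 1" "T + t0"] t0 by auto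
    ultimately show ?thesis
      using oracle_answers_round[OF t0(2)] True by (simp add: allowed_def)
  qed (use t0 in blast)
qed

lemma consultations_answered:
  assumes "\<And>t i. tq \<le> t \<Longrightarrow> i \<in> L \<Longrightarrow> qv (\<rho> t) k i \<noteq> None" and "j \<le> k"
  shows "\<exists>t. rsp (\<rho> t) j \<noteq> None"
  using \<open>j \<le> k\<close>
proof (induction j)
  case 0
  then show ?case
    using consultation_answered[of tq 0 0] assms(1) qv_\<rho>_earlier by blast
next
  case (Suc j)
  then obtain tp where "rsp (\<rho> tp) j \<noteq> None"
    by auto
  moreover have "qv (\<rho> t) (Suc j) i \<noteq> None" if "tq \<le> t" "i \<in> L" for t i
    using qv_\<rho>_earlier[OF assms(1)[OF that] Suc.prems] .
  ultimately show ?case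
    using consultation_answered[of tq "Suc j" tp] by simp
qed

lemma response_delivered:
  assumes "p \<in> P" "sched t0 = (c, [], [])" "\<rho> (T + t0) = c"
    and "ng c p < nq c p" "rsp c (ng c p) = Some d"
  shows "\<exists>t. Suc (ng c p) \<le> ng (\<rho> t) p"
proof -
  have "PStep p (Resp d) \<in> set (obligations c)"
    using assms by (auto simp: set_obligations response_delivery_def)
  then obtain t where t: "T + t0 \<le> t" "E t = PStep p (Resp d)"
    using obligation_occurs[OF assms(2)] by blast
  then have "ng c p \<le> ng (\<rho> t) p"
    using ng_\<rho>_mono[OF t(1), of p] assms(3) by simp
  then have "Suc (ng c p) \<le> ng (\<rho> (Suc t)) p"
    using t(2) by (simp add: \<rho>_Suc ng_effect_Resp)
  then show ?thesis
    by blast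
qed

lemma response_received:
  assumes p: "p \<in> P" and queried: "qv (\<rho> tp) k p \<noteq> None" and answered: "rsp (\<rho> tk) k \<noteq> None"
  shows "\<exists>t. k < ng (\<rho> t) p"
proof -
  have "\<exists>t. i \<le> ng (\<rho> t) p" if "i \<le> Suc k" for i
    using that
  proof (induction i)
    case (Suc i)
    then obtain ti where ti: "i \<le> ng (\<rho> ti) p"
      by auto
    obtain t0 c where t0: "max ti (max tk tp) \<le> T + t0" "sched t0 = (c, [], [])" "\<rho> (T + t0) = c"
      using round_end[of "max ti (max tk tp)"] by blast
    have wf: "wf_cfg c"
      using E_allowed[of "T + t0"] t0(3) by simp
    show ?case
    proof (cases "Suc i \<le> ng c p")
      case False
      moreover have "i \<le> ng c p"
        using ng_\<rho>_mono[of ti "T + t0" p] ti t0 by simp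
      ultimately have ng: "ng c p = i"
        by simp
      have "k < nq c p"
        using qv_\<rho>_mono[OF queried, of "T + t0"] t0 wf_cfg_qv[OF wf] by simp
      moreover have "rsp c k \<noteq> None"
        using rsp_\<rho>_mono[OF answered, of "T + t0"] t0 by simp
      then have "rsp c i \<noteq> None"
        using wf Suc.prems unfolding wf_cfg_def by (cases "i = k") auto
      ultimately show ?thesis
        using response_delivered[OF p t0(2,3)] ng Suc.prems by force
    qed (use t0 in blast)
  qed simp
  then show ?thesis
    by (meson Suc_le_eq order_refl)
qed

lemma oracle_liveness:
  assumes "n + 1 - f \<le> card {i \<in> {1..n + 1}. \<exists>t. qv (\<rho> t) k i \<noteq> None}"
    and "p \<in> correct n crashes" and "\<exists>t. qv (\<rho> t) k p \<noteq> None"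
  shows "\<exists>t. k < ng (\<rho> t) p"
proof -
  let ?Q = "{i \<in> {1..n + 1}. \<exists>t. qv (\<rho> t) k i \<noteq> None}"
  \<comment> \<open>only the processes of \<open>L\<close> ever query, so all of them query\<close>
  have "?Q \<subseteq> L"
    using E_allowed by (auto simp: wf_cfg_def)
  moreover have "card L \<le> card ?Q"
    using assms(1) nL_eq by simp
  ultimately have "?Q = L"
    by (simp add: card_seteq)
  then obtain tq where "\<forall>i\<in>L. qv (\<rho> tq) k i \<noteq> None"
    using ex_common_time[of L "\<lambda>i t. qv (\<rho> t) k i \<noteq> None"] qv_\<rho>_mono by blast
  then obtain tk where "rsp (\<rho> tk) k \<noteq> None"
    using consultations_answered[of tq k k] qv_\<rho>_mono by blast
  then show ?thesis
    using response_received assms(2,3) correct_crashes by blast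
qed

lemma run_admissible: "admissible_run A n (n + 1) f crashes V \<rho> E"
  unfolding admissible_run_def correct_crashes
proof (intro conjI allI ballI impI)
  show "\<rho> 0 = init_cfg A V"
    by (rule \<rho>_0)
  show "enabled n (n + 1) crashes t (\<rho> t) (E t)" for t
    by (rule E_enabled)
  show "\<rho> (Suc t) = effect A (\<rho> t) (E t)" for t
    by (rule \<rho>_Suc)
  show "\<exists>t' \<ge> t. \<exists>i. E t' = PStep p i" if "p \<in> P" for p t
    using correct_steps_infinitely[OF that] .
  show "\<exists>t' \<ge> t. E t' = PStep p (Msg q x)" if "p \<in> P" "(q, p, x) \<in># net (\<rho> t)" for p t q x
    using messages_delivered[OF that] .
  show "\<exists>t. k < ng (\<rho> t) p"
    if "n + 1 - f \<le> card {i \<in> {1..n + 1}. \<exists>t. qv (\<rho> t) k i \<noteq> None}"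
      "p \<in> P" "\<exists>t. qv (\<rho> t) k p \<noteq> None" for k p
    using oracle_liveness[OF that(1)] that(2,3) correct_crashes by simp
qed

lemma run_spec:
  "(\<forall>p\<in>P. \<exists>t. dec A p (st (\<rho> t) p) \<noteq> None) \<and>
   (\<forall>p\<in>{1..n}. \<forall>t d. dec A p (st (\<rho> t) p) = Some d \<longrightarrow>
      (\<forall>t'\<ge>t. dec A p (st (\<rho> t') p) = Some d)) \<and>
   (\<forall>p\<in>{1..n}. \<forall>q\<in>{1..n}. \<forall>t t' d d'. dec A p (st (\<rho> t) p) = Some d \<longrightarrow>
      dec A q (st (\<rho> t') q) = Some d' \<longrightarrow> d = d') \<and>
   (\<forall>p\<in>{1..n}. \<forall>t d. dec A p (st (\<rho> t) p) = Some d \<longrightarrow> d \<in> ConsP {1..n} crashes V)"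
proof -
  have "failure_pattern {1..n} crashes \<and> card (Faulty crashes) \<le> f \<and>
      admissible_run A n (n + 1) f crashes V \<rho> E"
    using failure_pattern_crashes card_Faulty_crashes run_admissible by blast
  from solves[unfolded solves_Cons_with_oracle_def, rule_format, OF this] show ?thesis
    unfolding correct_crashes .
qed

lemma run_decides: "p \<in> P \<Longrightarrow> \<exists>t. dec A p (st (\<rho> t) p) \<noteq> None"
  using run_spec[THEN conjunct1] by blast

lemma run_irrevocable:
  "p \<in> {1..n} \<Longrightarrow> dec A p (st (\<rho> t) p) = Some d \<Longrightarrow> t \<le> t' \<Longrightarrow> dec A p (st (\<rho> t') p) = Some d"
  using run_spec[THEN conjunct2, THEN conjunct1, rule_format] by blast

lemma run_agreement:
  "p \<in> {1..n} \<Longrightarrow> q \<in> {1..n} \<Longrightarrow> dec A p (st (\<rho> t) p) = Some d \<Longrightarrow>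
    dec A q (st (\<rho> t') q) = Some d' \<Longrightarrow> d = d'"
  using run_spec[THEN conjunct2, THEN conjunct2, THEN conjunct1, rule_format] by blast

lemma run_validity: "p \<in> {1..n} \<Longrightarrow> dec A p (st (\<rho> t) p) = Some d \<Longrightarrow> d \<in> ConsP {1..n} crashes V"
  using run_spec[THEN conjunct2, THEN conjunct2, THEN conjunct2, rule_format] by blast

end

section \<open>Valence\<close>

context reduction
begin

lemma fair_run_intro:
  assumes "applicable (init_cfg A V) \<sigma>" "P \<subseteq> L" "card (L - P) \<le> 1"
    "I (exec (init_cfg A V) \<sigma>)"
    "\<And>c e. wf_cfg c \<Longrightarrow> I c \<Longrightarrow> allowed c e \<Longrightarrow> steps_within P e \<Longrightarrow>
       applicable c (X c e) \<and> (\<forall>e' \<in> set (X c e). steps_within P e') \<and> I (exec c (X c e)) \<and>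
       X c e \<noteq> [] \<and> last (X c e) = e"
  shows "fair_run A nL n f V \<sigma> P X I"
proof -
  have "wf_cfg (exec (init_cfg A V) \<sigma>)"
    using wf_cfg_exec[OF wf_cfg_init assms(1)] .
  then show ?thesis
    using assms reduction_axioms
    by (simp add: fair_run_def fair_run_axioms_def fair_schedule_def)
qed

lemma fair_run_trivial:
  assumes "applicable (init_cfg A V) \<sigma>" "P \<subseteq> L" "card (L - P) \<le> 1"
  shows "fair_run A nL n f V \<sigma> P (\<lambda>c e. [e]) (\<lambda>_. True)"
  using assms by (intro fair_run_intro) (auto simp: steps_within_def)

definition reachable :: "('s, 'm) cfg \<Rightarrow> bool" where
  "reachable c \<longleftrightarrow> (\<exists>V xs. applicable (init_cfg A V) xs \<and> exec (init_cfg A V) xs = c)"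

definition decided :: "('s, 'm) cfg \<Rightarrow> bool \<Rightarrow> bool" where
  "decided c v \<longleftrightarrow> (\<exists>q\<in>{1..n}. dec A q (st c q) = Some v)"

definition valence :: "('s, 'm) cfg \<Rightarrow> bool set" where
  "valence c = {v. \<exists>c'. reach c c' \<and> decided c' v}"

lemma reachable_init: "reachable (init_cfg A V)"
  unfolding reachable_def by (intro exI[of _ V] exI[of _ "[]"]) simp

lemma reachable_reach: "reachable c \<Longrightarrow> reach c c' \<Longrightarrow> reachable c'"
  unfolding reachable_def reach_def by (metis applicable_append exec_append)

lemma reachable_wf_cfg: "reachable c \<Longrightarrow> wf_cfg c"
  unfolding reachable_def using wf_cfg_exec wf_cfg_init by blast

lemma valence_reach: "reach c c' \<Longrightarrow> valence c' \<subseteq> valence c"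
  unfolding valence_def using reach_trans by blast

lemma decided_agree:
  assumes "reachable c" "decided c v" "reach c c'" "decided c' w"
  shows "v = w"
proof -
  obtain V xs where xs: "applicable (init_cfg A V) xs" "exec (init_cfg A V) xs = c"
    using assms(1) reachable_def by blast
  obtain ys where ys: "applicable c ys" "exec c ys = c'"
    using assms(3) reach_def by blast
  interpret R: fair_run A nL n f V "xs @ ys" L "\<lambda>c e. [e]" "\<lambda>_. True"
    using xs ys by (intro fair_run_trivial) auto
  have "R.\<rho> (length xs) = c" "R.\<rho> (length (xs @ ys)) = c'"
    using R.\<rho>_prefix xs ys by simp_all
  then show ?thesis
    using assms(2,4) R.run_agreement unfolding decided_def by metis
qed

lemma valence_decided: "reachable c \<Longrightarrow> decided c v \<Longrightarrow> valence c \<subseteq> {v}"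
  unfolding valence_def using decided_agree by blast

text \<open>Since the system tolerates the crash of one process of \<open>L\<close>, the others decide without it.\<close>

lemma decides_without:
  assumes "reachable c"
  obtains xs q w where "applicable c xs" "\<forall>e \<in> set xs. \<not> step_of p e"
    "q \<in> {1..n}" "q \<noteq> p" "dec A q (st (exec c xs) q) = Some w"
proof -
  obtain V ys where ys: "applicable (init_cfg A V) ys" "exec (init_cfg A V) ys = c"
    using assms reachable_def by blast
  have "card (L - (L - {p})) \<le> 1"
    by (rule order_trans[OF card_mono[of "{p}"]]) auto
  then interpret R: fair_run A nL n f V ys "L - {p}" "\<lambda>c e. [e]" "\<lambda>_. True"
    using ys by (intro fair_run_trivial) auto
  obtain q where q: "q \<in> L - {p}"
  proof (cases "p = 1")
    case True
    then show ?thesis using that[of 2] two_le_nL by auto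
  next
    case False
    then show ?thesis using that[of 1] two_le_nL by auto
  qed
  then obtain t d where d: "dec A q (st (R.\<rho> t) q) = Some d"
    using R.run_decides by blast
  let ?t = "max t (length ys)"
  let ?xs = "map R.E [length ys..<?t]"
  have qn: "q \<in> {1..n}"
    using q nL_le_n by auto
  have seg: "applicable c ?xs \<and> exec c ?xs = R.\<rho> ?t"
    using R.exec_segment[of "length ys" ?t] R.\<rho>_prefix[of "length ys"] ys by simp
  show ?thesis
  proof (rule that[of ?xs q d])
    show "applicable c ?xs"
      using seg by blast
    show "\<forall>e \<in> set ?xs. \<not> step_of p e"
    proof
      fix e
      assume "e \<in> set ?xs"
      then have "steps_within (L - {p}) e"
        by (rule R.segment_steps_within[OF order_refl])
      then show "\<not> step_of p e"
        by (auto simp: steps_within_def step_of_def)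
    qed
    show "q \<in> {1..n}" "q \<noteq> p"
      using q nL_le_n by auto
    show "dec A q (st (exec c ?xs) q) = Some d"
      using seg R.run_irrevocable[OF _ d, of ?t] q nL_le_n by simp
  qed
qed

lemma valence_nonempty:
  assumes "reachable c"
  shows "valence c \<noteq> {}"
proof -
  obtain xs q w where "applicable c xs" "q \<in> {1..n}" "dec A q (st (exec c xs) q) = Some w"
    using decides_without[OF assms, of 0] by metis
  then have "w \<in> valence c"
    unfolding valence_def decided_def reach_def by blast
  then show ?thesis
    by blast
qed

lemma univalent:
  assumes "reachable c" "valence c \<noteq> UNIV"
  shows "\<exists>b. valence c = {b}"
proof -
  obtain b where b: "b \<in> valence c"
    using valence_nonempty[OF assms(1)] by blast
  have "(\<not> b) \<notin> valence c"
  proof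
    assume "(\<not> b) \<in> valence c"
    then have "v \<in> valence c" for v
      using b by (cases "v = b") auto
    then show False
      using assms(2) by auto
  qed
  then have "valence c \<subseteq> {b}"
    by (auto intro: ccontr)
  then show ?thesis
    using b by blast
qed

lemma valence_init: "valence (init_cfg A V) \<subseteq> ConsP {1..n} F V"
proof
  fix w
  assume "w \<in> valence (init_cfg A V)"
  then obtain xs where xs: "applicable (init_cfg A V) xs" "decided (exec (init_cfg A V) xs) w"
    unfolding valence_def reach_def by blast
  interpret R: fair_run A nL n f V xs L "\<lambda>c e. [e]" "\<lambda>_. True"
    using xs(1) by (intro fair_run_trivial) auto
  have "R.\<rho> (length xs) = exec (init_cfg A V) xs"
    using R.\<rho>_prefix by simp
  then have "w \<in> ConsP {1..n} R.crashes V"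
    using xs(2) R.run_validity unfolding decided_def by metis
  then show "w \<in> ConsP {1..n} F V"
    by (simp add: ConsP_def)
qed

lemma univalent_agree_except:
  assumes "reachable c" "agree_except p c c'" "valence c = {b}" "valence c' = {b'}"
  shows "b = b'"
proof -
  obtain xs q w where xs: "applicable c xs" "\<forall>e \<in> set xs. \<not> step_of p e" "q \<in> {1..n}" "q \<noteq> p"
    "dec A q (st (exec c xs) q) = Some w"
    using decides_without[OF assms(1)] by metis
  have "decided (exec c xs) w"
    using xs(3,5) unfolding decided_def by blast
  then have "w \<in> valence c"
    using xs(1) unfolding valence_def reach_def by blast
  moreover have "applicable c' xs" "st (exec c' xs) q = st (exec c xs) q"
    using agree_except_exec[OF assms(2) xs(1,2)] xs(4) by (auto simp: agree_except_def)
  then have "decided (exec c' xs) w"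
    using xs(3,5) unfolding decided_def by metis
  then have "w \<in> valence c'"
    using \<open>applicable c' xs\<close> unfolding valence_def reach_def by blast
  ultimately show ?thesis
    using assms(3,4) by simp
qed

lemma bivalent_initial: "\<exists>V. valence (init_cfg A V) = UNIV"
proof (rule ccontr)
  assume no_bivalent: "\<nexists>V. valence (init_cfg A V) = UNIV"
  define W where "W j i \<longleftrightarrow> i \<le> j" for j i :: nat
  have "1 \<in> {1..n}"
    using nL_le_n two_le_nL by simp
  then have "valence (init_cfg A (W 0)) \<subseteq> {False}" "valence (init_cfg A (W n)) \<subseteq> {True}"
    using valence_init[of "W 0" "\<lambda>_. {}"] valence_init[of "W n" "\<lambda>_. {}"]
      ConsP_unanimous[of 1 "{1..n}" "W 0" False] ConsP_unanimous[of 1 "{1..n}" "W n" True]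
    by (auto simp: W_def)
  then have "valence (init_cfg A (W 0)) \<noteq> valence (init_cfg A (W n))"
    using valence_nonempty[OF reachable_init] by blast
  \<comment> \<open>consecutive input vectors differ only at one process, whose crash is tolerated\<close>
  then obtain j where j: "valence (init_cfg A (W j)) \<noteq> valence (init_cfg A (W (Suc j)))"
    using ex_nat_change[of "\<lambda>j. valence (init_cfg A (W j))"] by blast
  obtain b b' where b: "valence (init_cfg A (W j)) = {b}" "valence (init_cfg A (W (Suc j))) = {b'}"
    using univalent[OF reachable_init] no_bivalent by metis
  have "agree_except (Suc j) (init_cfg A (W j)) (init_cfg A (W (Suc j)))"
    unfolding agree_except_def init_cfg_def W_def by (simp add: le_Suc_eq)
  then have "b = b'"
    using univalent_agree_except[OF reachable_init _ b] by blast
  then show False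
    using j b by simp
qed

text \<open>If \<open>e\<close> and \<open>e'\<close> are steps of the same process \<open>p\<close>, let the others run without \<open>p\<close> to a
  decision \<open>w\<close>; the configurations after \<open>e\<close> and after \<open>e' e\<close> both reach, by the same events, a
  successor of that decided configuration, so both valences are \<open>{w}\<close>.\<close>

lemma univalent_successors_agree_step_of:
  assumes "reachable c" "step_of p e" "step_of p e'"
    and en: "allowed c e" and en': "allowed c e'" and en'': "allowed (effect A c e') e"
    and "valence (effect A c e) = {b}" "valence (effect A (effect A c e') e) = {b'}"
  shows "b = b'"
proof -
  have wf: "wf_cfg c" "wf_cfg (effect A c e')"
    using assms(1) en' reachable_wf_cfg wf_cfg_effect by blast+
  obtain xs q w where xs: "applicable c xs" "\<forall>x \<in> set xs. \<not> step_of p x" "q \<in> {1..n}"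
    "dec A q (st (exec c xs) q) = Some w"
    using decides_without[OF assms(1)] by metis
  define D where "D = exec c xs"
  have D: "reachable D" "valence D \<subseteq> {w}"
    using reachable_reach[OF assms(1)] valence_decided xs unfolding D_def reach_def decided_def
    by blast+
  have via_D: "v = w" if "reach D Z" "reach Y Z" "valence Y = {v}" for Y Z v
    using valence_reach[OF that(1)] valence_reach[OF that(2)] that(3) D
      valence_nonempty[OF reachable_reach[OF D(1) that(1)]] by blast
  have indep: "\<forall>x \<in> set xs. \<not> same_agent e x" "\<forall>x \<in> set xs. \<not> same_agent e' x"
    using xs(2) assms(2,3) by (auto simp: same_agent_def step_of_def)
  have 1: "applicable (effect A c e) xs \<and> allowed D e \<and> exec (effect A c e) xs = effect A D e"
    using commute_past_exec[OF wf(1) xs(1) indep(1) en] unfolding D_def .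
  have 2: "applicable (effect A c e') xs \<and> allowed D e' \<and> exec (effect A c e') xs = effect A D e'"
    using commute_past_exec[OF wf(1) xs(1) indep(2) en'] unfolding D_def .
  have 3: "applicable (effect A (effect A c e') e) xs \<and> allowed (effect A D e') e \<and>
      exec (effect A (effect A c e') e) xs = effect A (effect A D e') e"
    using commute_past_exec[OF wf(2) _ indep(1) en''] 2 by simp
  have "b = w"
    using via_D[of "effect A D e" "effect A c e"] 1 assms(7) reach_effect
    unfolding reach_def by blast
  moreover have "reach D (effect A (effect A D e') e)"
    using reach_trans[OF reach_effect reach_effect] 2 3 by blast
  then have "b' = w"
    using via_D[of _ "effect A (effect A c e') e"] 3 assms(8) unfolding reach_def by blast
  ultimately show ?thesis
    by simp
qed

lemma univalent_successors_agree:
  assumes "reachable c" "allowed c e" "allowed c e'" "e' \<noteq> e"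
    and "valence (effect A c e) = {b}" "valence (effect A (effect A c e') e) = {b'}"
  shows "b = b'"
proof -
  have wf: "wf_cfg c"
    using assms(1) reachable_wf_cfg by blast
  have en: "allowed (effect A c e') e"
    using allowed_persists[OF wf assms(2,3,4)] .
  consider "\<not> same_agent e e'" | p where "step_of p e" "step_of p e'"
    | k d k' d' where "e = ORespond k d" "e' = ORespond k' d'"
    by (cases e; cases e') (auto simp: same_agent_def step_of_def)
  then show ?thesis
  proof cases
    case 1
    then have "reach (effect A c e) (effect A (effect A c e') e)"
      using allowed_commute[OF wf assms(2,3)] reach_effect by metis
    then show ?thesis
      using valence_reach assms(5,6) by blast
  next
    case 2
    then show ?thesis
      using univalent_successors_agree_step_of[OF assms(1) _ _ assms(2,3) en assms(5,6)] by blast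
  next
    case 3
    then show ?thesis
      using allowed_ORespond_unique[OF wf] assms(2,3,4) by blast
  qed
qed

text \<open>A path to a decision \<open>v\<close> either contains \<open>e\<close>, or can be followed by \<open>e\<close>.\<close>

lemma valence_through_event:
  assumes "reachable c" "allowed c e" "v \<in> valence c"
  shows "\<exists>xs. applicable c xs \<and> e \<notin> set xs \<and> v \<in> valence (effect A (exec c xs) e)"
proof -
  obtain ys where ys: "applicable c ys" "decided (exec c ys) v"
    using assms(3) unfolding valence_def reach_def by blast
  show ?thesis
  proof (cases "e \<in> set ys")
    case True
    then obtain ys1 ys2 where "ys = ys1 @ e # ys2" "e \<notin> set ys1"
      by (meson split_list_first)
    with ys show ?thesis
      by (intro exI[of _ ys1]) (auto simp: valence_def reach_def)
  next
    case False
    have wf: "wf_cfg c"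
      using assms(1) reachable_wf_cfg by blast
    have "reachable (exec c ys)"
      using reachable_reach[OF assms(1)] ys(1) unfolding reach_def by blast
    moreover have "reach (exec c ys) (effect A (exec c ys) e)"
      using reach_effect allowed_persists_exec[OF wf ys(1) False assms(2)] by blast
    ultimately have "valence (effect A (exec c ys) e) \<subseteq> {v}"
        "valence (effect A (exec c ys) e) \<noteq> {}"
      using valence_reach valence_decided[OF _ ys(2)] valence_nonempty reachable_reach by blast+
    then show ?thesis
      using ys(1) False by blast
  qed
qed

lemma bivalent_extension:
  assumes "reachable c" "valence c = UNIV" "allowed c e"
  shows "\<exists>xs. applicable c xs \<and> e \<notin> set xs \<and> valence (effect A (exec c xs) e) = UNIV"
proof (rule ccontr)
  assume no_extension: "\<not> ?thesis"
  define U where "U xs = valence (effect A (exec c xs) e)" for xs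
  have wf: "wf_cfg c"
    using assms(1) reachable_wf_cfg by blast
  have univalent_U: "\<exists>b. U xs = {b}" if "applicable c xs" "e \<notin> set xs" for xs
    using univalent[OF reachable_reach[OF assms(1) reach_postponed[OF wf that assms(3)]]]
      no_extension that unfolding U_def by blast
  obtain b0 where b0: "U [] = {b0}"
    using univalent_U by fastforce
  have "(\<not> b0) \<in> valence c"
    using assms(2) by simp
  then obtain xs where xs: "applicable c xs" "e \<notin> set xs" "(\<not> b0) \<in> U xs"
    using valence_through_event[OF assms(1,3)] unfolding U_def by blast
  then have "U xs \<noteq> U []"
    using b0 by force
  \<comment> \<open>somewhere along \<open>xs\<close> a single event \<open>e'\<close> flips the value reached by \<open>e\<close>\<close>
  then obtain ys e' zs where split: "xs = ys @ e' # zs" "U ys \<noteq> U (ys @ [e'])"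
    using ex_prefix_change[of U xs] by metis
  have ys: "applicable c ys" "applicable c (ys @ [e'])" "e \<notin> set ys" "e \<notin> set (ys @ [e'])"
    using xs split by auto
  obtain b b' where b: "U ys = {b}" "U (ys @ [e']) = {b'}"
    using univalent_U ys by metis
  have "reachable (exec c ys)"
    using reachable_reach[OF assms(1)] ys(1) unfolding reach_def by blast
  moreover have "allowed (exec c ys) e" "allowed (exec c ys) e'" "e' \<noteq> e"
    using allowed_persists_exec[OF wf ys(1,3) assms(3)] ys(2,4) by auto
  ultimately have "b = b'"
    using univalent_successors_agree[of "exec c ys" e e' b b'] b unfolding U_def by simp
  then show False
    using split(2) b by simp
qed

lemma bivalent_fair_run:
  assumes "valence (init_cfg A V) = UNIV"
  shows "\<exists>X. fair_run A nL n f V [] L X (\<lambda>c. reachable c \<and> valence c = UNIV)"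
proof -
  define I where "I c \<longleftrightarrow> reachable c \<and> valence c = UNIV" for c
  define Y where "Y c e = (SOME ys. applicable c ys \<and> e \<notin> set ys \<and>
    valence (effect A (exec c ys) e) = UNIV)" for c e
  have Y: "applicable c (Y c e) \<and> e \<notin> set (Y c e) \<and> valence (effect A (exec c (Y c e)) e) = UNIV"
    if "I c" "allowed c e" for c e
    unfolding Y_def by (rule someI_ex) (use bivalent_extension that I_def in blast)
  have "fair_run A nL n f V [] L (\<lambda>c e. Y c e @ [e]) I"
  proof (rule fair_run_intro)
    show "I (exec (init_cfg A V) [])"
      using assms reachable_init I_def by simp
    fix c e
    assume "wf_cfg c" "I c" "allowed c e" and e_in_L: "steps_within L e"
    then have "applicable c (Y c e @ [e])"
      using Y allowed_persists_exec by simp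
    moreover have "reachable (exec c (Y c e @ [e]))"
      using \<open>I c\<close> calculation reachable_reach unfolding I_def reach_def by blast
    ultimately show "applicable c (Y c e @ [e]) \<and> (\<forall>e' \<in> set (Y c e @ [e]). steps_within L e') \<and>
      I (exec c (Y c e @ [e])) \<and> Y c e @ [e] \<noteq> [] \<and> last (Y c e @ [e]) = e"
      using Y[OF \<open>I c\<close> \<open>allowed c e\<close>] applicable_PStep_in_L e_in_L
      unfolding I_def steps_within_def by auto
  qed auto
  then show ?thesis
    unfolding I_def by blast
qed

text \<open>In the fair run whose every obligation is preceded by a detour into a bivalent
  configuration all round ends are bivalent, so nobody ever decides.\<close>

theorem no_algorithm: False
proof -
  obtain V where "valence (init_cfg A V) = UNIV"
    using bivalent_initial by blast
  then obtain X where "fair_run A nL n f V [] L X (\<lambda>c. reachable c \<and> valence c = UNIV)"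
    using bivalent_fair_run by blast
  then interpret R: fair_run A nL n f V "[]" L X "\<lambda>c. reachable c \<and> valence c = UNIV" .
  have "1 \<in> L" "1 \<in> {1..n}"
    using two_le_nL nL_le_n by simp_all
  then obtain t where "dec A 1 (st (R.\<rho> t) 1) \<noteq> None"
    using R.run_decides by blast
  then obtain d where "decided (R.\<rho> t) d"
    using \<open>1 \<in> {1..n}\<close> unfolding decided_def by blast
  obtain t0 c where t0: "t \<le> R.T + t0" "R.sched t0 = (c, [], [])" "R.\<rho> (R.T + t0) = c"
    using R.round_end[of t] by (elim exE conjE) (rule that)
  have "applicable (init_cfg A V) (map R.E [0..<t]) \<and> exec (init_cfg A V) (map R.E [0..<t]) = R.\<rho> t"
    using R.exec_segment[of 0 t] R.\<rho>_0 by simp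
  then have "reachable (R.\<rho> t)"
    unfolding reachable_def by blast
  moreover have "reach (R.\<rho> t) c"
    using R.exec_segment[OF t0(1)] t0(3) unfolding reach_def by blast
  ultimately have "valence c \<subseteq> {d}"
    using valence_reach valence_decided \<open>decided (R.\<rho> t) d\<close> by blast
  then show False
    using R.I_round_end[OF t0(2)] by auto
qed

end

theorem mainTheorem16:
  fixes n f :: nat
  assumes "1 \<le> f" and "f \<le> n - 1"
  shows "\<not> C_reducible_Cons_Cons_succ TYPE('s) TYPE('m) n f"
proof
  assume "C_reducible_Cons_Cons_succ TYPE('s) TYPE('m) n f"
  then obtain A :: "('s, 'm) algo" where "solves_Cons_with_oracle A n f (n + 1) f"
    unfolding C_reducible_Cons_Cons_succ_def by blast
  then interpret reduction A "n + 1 - f" n f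
    using assms by unfold_locales auto
  show False
    by (rule no_algorithm)
qed

end
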